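(* For all integers $k\ge1$ and generic $a,b,c,d$, the polynomials $$Q_k^{(2)}(n;a;b,c,d)=\sum_{j=0}^k\frac{(-n)_j(n+a)_j(-k)_j(k-1-a+b+c+d)_j}{j!(b)_j(c)_j(d)_j}$$ satisfy $$abcd\,\frac{n+\frac a2}{\frac a2}\,Q_k^{(2)}(n;a;b,c,d)=(n+a)(n+b)(n+c)(n+d)\,Q_{k-1}^{(2)}(n;a+1;b+1,c+1,d+1)$$ $$\qquad-n(n+a-b)(n+a-c)(n+a-d)\,Q_{k-1}^{(2)}(n-1;a+1;b+1,c+1,d+1).$$
   Context: $(c)_n$ denotes the Pochhammer symbol, $(c)_0=1$. *)

theory Defs
  imports Complex_Main
begin

definition Q2 :: "nat \<Rightarrow> complex \<Rightarrow> complex \<Rightarrow> complex \<Rightarrow> complex \<Rightarrow> complex \<Rightarrow> complex" where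
  "Q2 k n a b c d = (\<Sum>j=0..k.
     pochhammer (-n) j * pochhammer (n + a) j * pochhammer (- of_nat k) j
       * pochhammer (of_nat k - 1 - a + b + c + d) j
     / (fact j * pochhammer b j * pochhammer c j * pochhammer d j))"

end

theory Submission imports Defs begin

text \<open>Write \<open>Q\<^sub>k = \<Sum>\<^sub>j (-n)\<^sub>j (n+a)\<^sub>j L\<^sub>j\<close> with \<open>n\<close>-free coefficients \<open>L\<^sub>j\<close>.
  For each \<open>j\<close>, the combination of \<open>(-n)\<^sub>j (n+a+1)\<^sub>j\<close> and \<open>(1-n)\<^sub>j (n+a)\<^sub>j\<close> on the right-hand side
  equals \<open>2n+a\<close> times a combination of \<open>(-n)\<^sub>j (n+a)\<^sub>j\<close> and \<open>(-n)\<^sub>j\<^sub>+\<^sub>1 (n+a)\<^sub>j\<^sub>+\<^sub>1\<close>.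
  Summation by parts moves the index shift onto the coefficients of \<open>Q\<^sub>k\<^sub>-\<^sub>1\<close>, and a contiguous
  relation between those and the \<open>L\<^sub>j\<close> reassembles \<open>bcd Q\<^sub>k\<close>.\<close>

definition hyper_coeff :: "'a::field_char_0 \<Rightarrow> 'a \<Rightarrow> 'a \<Rightarrow> 'a \<Rightarrow> 'a \<Rightarrow> nat \<Rightarrow> 'a" where
  "hyper_coeff \<alpha> \<beta> \<gamma> \<delta> \<epsilon> j =
     pochhammer \<alpha> j * pochhammer \<beta> j / (fact j * pochhammer \<gamma> j * pochhammer \<delta> j * pochhammer \<epsilon> j)"

lemma hyper_coeff_Suc_shift:
  "hyper_coeff \<alpha> \<beta> \<gamma> \<delta> \<epsilon> (Suc j)
     = \<alpha> * \<beta> / (of_nat (Suc j) * \<gamma> * \<delta> * \<epsilon>) * hyper_coeff (\<alpha> + 1) (\<beta> + 1) (\<gamma> + 1) (\<delta> + 1) (\<epsilon> + 1) j"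
  unfolding hyper_coeff_def pochhammer_rec fact_Suc of_nat_mult
  by (simp add: times_divide_times_eq mult_ac)

lemma hyper_coeff_Suc:
  assumes "pochhammer \<gamma> (Suc j) \<noteq> 0" "pochhammer \<delta> (Suc j) \<noteq> 0" "pochhammer \<epsilon> (Suc j) \<noteq> 0"
  shows "hyper_coeff \<alpha> \<beta> \<gamma> \<delta> \<epsilon> (Suc j) * ((\<gamma> + of_nat j) * (\<delta> + of_nat j) * (\<epsilon> + of_nat j))
     = hyper_coeff \<alpha> \<beta> \<gamma> \<delta> \<epsilon> j * (\<alpha> + of_nat j) * (\<beta> + of_nat j) / of_nat (Suc j)"
proof -
  define G where "G = (\<gamma> + of_nat j) * (\<delta> + of_nat j) * (\<epsilon> + of_nat j)"
  have "G \<noteq> 0"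
    using assms unfolding G_def pochhammer_Suc by simp
  have "hyper_coeff \<alpha> \<beta> \<gamma> \<delta> \<epsilon> (Suc j)
      = hyper_coeff \<alpha> \<beta> \<gamma> \<delta> \<epsilon> j * (\<alpha> + of_nat j) * (\<beta> + of_nat j) / (of_nat (Suc j) * G)"
    unfolding hyper_coeff_def pochhammer_Suc fact_Suc G_def of_nat_mult
    by (simp add: times_divide_times_eq mult_ac)
  with \<open>G \<noteq> 0\<close> show ?thesis
    unfolding G_def[symmetric] by simp
qed

lemma hyper_coeff_neg_of_nat_vanishes:
  "hyper_coeff (- of_nat m) \<beta> \<gamma> \<delta> \<epsilon> (Suc m) = 0"
  by (simp add: hyper_coeff_def pochhammer_of_nat_eq_0_lemma)

lemma Q2_eq_sum_hyper_coeff: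
  "Q2 k n a b c d = (\<Sum>j\<le>k. pochhammer (-n) j * pochhammer (n + a) j
      * hyper_coeff (- of_nat k) (of_nat k - 1 - a + b + c + d) b c d j)"
  unfolding Q2_def hyper_coeff_def atLeast0AtMost by (simp add: mult_ac)

lemma pochhammer_contiguous_product:
  fixes n a b c d :: "'a::comm_ring_1"
  shows "(n + a) * (n + b) * (n + c) * (n + d) * (pochhammer (-n) j * pochhammer (n + a + 1) j)
       - n * (n + a - b) * (n + a - c) * (n + a - d) * (pochhammer (1 - n) j * pochhammer (n + a) j)
     = (2 * n + a) * ((b + of_nat j) * (c + of_nat j) * (d + of_nat j) * (pochhammer (-n) j * pochhammer (n + a) j)
       - (b + c + d - a + of_nat j) * (pochhammer (-n) (Suc j) * pochhammer (n + a) (Suc j)))"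
proof -
  have shift_a: "(n + a) * pochhammer (n + a + 1) j = pochhammer (n + a) j * (n + a + of_nat j)"
    using pochhammer_rec[of "n + a" j] pochhammer_Suc[of "n + a" j] by simp
  have shift_n: "n * pochhammer (1 - n) j = - (pochhammer (-n) j * (- n + of_nat j))"
    using pochhammer_rec[of "-n" j] pochhammer_Suc[of "-n" j] by (simp add: add.commute)
  have "(n + a) * (n + b) * (n + c) * (n + d) * (pochhammer (-n) j * pochhammer (n + a + 1) j)
       - n * (n + a - b) * (n + a - c) * (n + a - d) * (pochhammer (1 - n) j * pochhammer (n + a) j)
     = (n + b) * (n + c) * (n + d) * pochhammer (-n) j * ((n + a) * pochhammer (n + a + 1) j)
       - (n + a - b) * (n + a - c) * (n + a - d) * pochhammer (n + a) j * (n * pochhammer (1 - n) j)"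
    by (simp add: mult_ac)
  also have "\<dots> = (2 * n + a) * ((b + of_nat j) * (c + of_nat j) * (d + of_nat j) * (pochhammer (-n) j * pochhammer (n + a) j)
       - (b + c + d - a + of_nat j) * (pochhammer (-n) (Suc j) * pochhammer (n + a) (Suc j)))"
    unfolding shift_a shift_n pochhammer_Suc by (simp add: algebra_simps)
  finally show ?thesis .
qed

lemma sum_atMost_summation_by_parts:
  fixes u v p :: "nat \<Rightarrow> 'a::comm_ring"
  shows "(\<Sum>j\<le>m. u j * p j - v j * p (Suc j)) + u (Suc m) * p (Suc m)
     = u 0 * p 0 + (\<Sum>j\<le>m. (u (Suc j) - v j) * p (Suc j))"
  by (induction m) (simp_all add: algebra_simps)

lemma hyper_coeff_contiguous:
  fixes a b c d :: "'a::field_char_0"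
  assumes b: "pochhammer b (Suc m) \<noteq> 0" and c: "pochhammer c (Suc m) \<noteq> 0"
    and d: "pochhammer d (Suc m) \<noteq> 0" and "i \<le> m"
  defines "e \<equiv> of_nat m - a + b + c + d"
  shows "b * c * d * hyper_coeff (- of_nat (Suc m)) e b c d (Suc i)
     = hyper_coeff (- of_nat m) (e + 1) (b + 1) (c + 1) (d + 1) (Suc i)
         * ((b + of_nat (Suc i)) * (c + of_nat (Suc i)) * (d + of_nat (Suc i)))
       - (b + c + d - a + of_nat i) * hyper_coeff (- of_nat m) (e + 1) (b + 1) (c + 1) (d + 1) i"
proof -
  define V where "V = hyper_coeff (- of_nat m) (e + 1) (b + 1) (c + 1) (d + 1)"
  have "b \<noteq> 0" "c \<noteq> 0" "d \<noteq> 0"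
    using b c d by (simp_all add: pochhammer_rec)
  have ratio: "V (Suc i) * ((b + 1 + of_nat i) * (c + 1 + of_nat i) * (d + 1 + of_nat i))
      = V i * (- of_nat m + of_nat i) * (e + 1 + of_nat i) / of_nat (Suc i)"
  proof (cases "i < m")
    case True
    have "pochhammer x (Suc (Suc i)) \<noteq> 0 \<Longrightarrow> pochhammer (x + 1) (Suc i) \<noteq> 0" for x :: 'a
      by (simp add: pochhammer_rec[of x "Suc i"])
    moreover have "pochhammer x (Suc (Suc i)) \<noteq> 0" if "pochhammer x (Suc m) \<noteq> 0" for x :: 'a
      using pochhammer_neq_0_mono[OF that] True by simp
    ultimately show ?thesis
      unfolding V_def using b c d by (intro hyper_coeff_Suc) auto
  next
    case False
    \<comment> \<open>\<open>(b+1)\<^sub>m\<^sub>+\<^sub>1\<close> may vanish here, but so does the numerator \<open>(-m)\<^sub>m\<^sub>+\<^sub>1\<close>.\<close>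
    with \<open>i \<le> m\<close> have "i = m" by simp
    then show ?thesis
      unfolding V_def by (simp add: hyper_coeff_neg_of_nat_vanishes)
  qed
  have shift: "hyper_coeff (- of_nat (Suc m)) e b c d (Suc i)
      = - of_nat (Suc m) * e / (of_nat (Suc i) * b * c * d) * V i"
    unfolding V_def hyper_coeff_Suc_shift by simp
  have "of_nat (Suc i) \<noteq> (0::'a)"
    by (simp only: of_nat_eq_0_iff)
  have upper: "- of_nat (Suc m) * e
      = (- of_nat m + of_nat i) * (e + 1 + of_nat i) - of_nat (Suc i) * (b + c + d - a + of_nat i)"
    unfolding e_def by (simp add: algebra_simps)
  have "b * c * d * hyper_coeff (- of_nat (Suc m)) e b c d (Suc i)
      = - of_nat (Suc m) * e / of_nat (Suc i) * V i"
    unfolding shift using \<open>b \<noteq> 0\<close> \<open>c \<noteq> 0\<close> \<open>d \<noteq> 0\<close> \<open>of_nat (Suc i) \<noteq> 0\<close>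
    by (simp add: field_simps del: of_nat_Suc)
  also have "\<dots> = V i * (- of_nat m + of_nat i) * (e + 1 + of_nat i) / of_nat (Suc i)
      - (b + c + d - a + of_nat i) * V i"
    unfolding upper using \<open>of_nat (Suc i) \<noteq> 0\<close> by (simp add: field_simps del: of_nat_Suc)
  also have "\<dots> = V (Suc i) * ((b + of_nat (Suc i)) * (c + of_nat (Suc i)) * (d + of_nat (Suc i)))
      - (b + c + d - a + of_nat i) * V i"
    unfolding ratio[symmetric] by (simp add: add.assoc)
  finally show ?thesis
    unfolding V_def .
qed

lemma hyper_coeff_summation_by_parts:
  fixes a b c d :: "'a::field_char_0" and p :: "nat \<Rightarrow> 'a"
  assumes "pochhammer b (Suc m) \<noteq> 0" "pochhammer c (Suc m) \<noteq> 0" "pochhammer d (Suc m) \<noteq> 0"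
  defines "e \<equiv> of_nat m - a + b + c + d"
  shows "(\<Sum>j\<le>m. hyper_coeff (- of_nat m) (e + 1) (b + 1) (c + 1) (d + 1) j
            * ((b + of_nat j) * (c + of_nat j) * (d + of_nat j) * p j - (b + c + d - a + of_nat j) * p (Suc j)))
     = b * c * d * (\<Sum>j\<le>Suc m. p j * hyper_coeff (- of_nat (Suc m)) e b c d j)"
proof -
  define L where "L = hyper_coeff (- of_nat (Suc m)) e b c d"
  define V where "V = hyper_coeff (- of_nat m) (e + 1) (b + 1) (c + 1) (d + 1)"
  define u where "u j = V j * ((b + of_nat j) * (c + of_nat j) * (d + of_nat j))" for j
  define v where "v j = (b + c + d - a + of_nat j) * V j" for j
  have "u (Suc m) = 0"
    unfolding u_def V_def by (simp add: hyper_coeff_neg_of_nat_vanishes)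
  have coeff: "u (Suc j) - v j = b * c * d * L (Suc j)" if "j \<le> m" for j
    using hyper_coeff_contiguous[of b m c d j a] assms(1-3) that
    unfolding u_def v_def V_def L_def e_def by simp
  have "(\<Sum>j\<le>m. V j * ((b + of_nat j) * (c + of_nat j) * (d + of_nat j) * p j - (b + c + d - a + of_nat j) * p (Suc j)))
      = (\<Sum>j\<le>m. u j * p j - v j * p (Suc j))"
    unfolding u_def v_def by (simp add: algebra_simps)
  also have "\<dots> = u 0 * p 0 + (\<Sum>j\<le>m. (u (Suc j) - v j) * p (Suc j))"
    using sum_atMost_summation_by_parts[of u p v m] \<open>u (Suc m) = 0\<close> by simp
  also have "\<dots> = b * c * d * (p 0 * L 0) + b * c * d * (\<Sum>j\<le>m. p (Suc j) * L (Suc j))"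
  proof -
    have "u 0 = b * c * d * L 0"
      by (simp add: u_def V_def L_def hyper_coeff_def)
    moreover have "(\<Sum>j\<le>m. (u (Suc j) - v j) * p (Suc j)) = b * c * d * (\<Sum>j\<le>m. p (Suc j) * L (Suc j))"
      unfolding sum_distrib_left by (rule sum.cong) (simp_all add: coeff)
    ultimately show ?thesis
      by (simp add: mult_ac)
  qed
  also have "\<dots> = b * c * d * (\<Sum>j\<le>Suc m. p j * L j)"
    unfolding sum.atMost_Suc_shift by (simp only: distrib_left)
  finally show ?thesis
    unfolding V_def L_def .
qed

theorem mainTheorem16:
  fixes k :: nat and n a b c d :: complex
  assumes "k \<ge> 1"
    and "a \<noteq> 0"
    and "pochhammer b k \<noteq> 0" and "pochhammer c k \<noteq> 0" and "pochhammer d k \<noteq> 0"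
  shows "a * b * c * d * ((n + a / 2) / (a / 2)) * Q2 k n a b c d
       = (n + a) * (n + b) * (n + c) * (n + d) * Q2 (k - 1) n (a + 1) (b + 1) (c + 1) (d + 1)
         - n * (n + a - b) * (n + a - c) * (n + a - d) * Q2 (k - 1) (n - 1) (a + 1) (b + 1) (c + 1) (d + 1)"
proof -
  obtain m where k: "k = Suc m" using assms(1) by (cases k) auto
  define e where "e = of_nat m - a + b + c + d"
  define V where "V = hyper_coeff (- of_nat m) (e + 1) (b + 1) (c + 1) (d + 1)"
  define P where "P j = pochhammer (-n) j * pochhammer (n + a) j" for j
  have Q_shift: "Q2 (k - 1) n (a + 1) (b + 1) (c + 1) (d + 1)
      = (\<Sum>j\<le>m. pochhammer (-n) j * pochhammer (n + a + 1) j * V j)"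
    unfolding Q2_eq_sum_hyper_coeff k V_def e_def by (simp add: algebra_simps)
  have Q_shift_n: "Q2 (k - 1) (n - 1) (a + 1) (b + 1) (c + 1) (d + 1)
      = (\<Sum>j\<le>m. pochhammer (1 - n) j * pochhammer (n + a) j * V j)"
    unfolding Q2_eq_sum_hyper_coeff k V_def e_def by (simp add: algebra_simps)
  have termwise: "(n + a) * (n + b) * (n + c) * (n + d) * (pochhammer (-n) j * pochhammer (n + a + 1) j * V j)
      - n * (n + a - b) * (n + a - c) * (n + a - d) * (pochhammer (1 - n) j * pochhammer (n + a) j * V j)
      = (2 * n + a) * (V j * ((b + of_nat j) * (c + of_nat j) * (d + of_nat j) * P j
          - (b + c + d - a + of_nat j) * P (Suc j)))" for j
    using arg_cong[OF pochhammer_contiguous_product[of n a b c d j], of "\<lambda>x. x * V j"]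
    unfolding P_def by (simp add: algebra_simps)
  have "(n + a) * (n + b) * (n + c) * (n + d) * Q2 (k - 1) n (a + 1) (b + 1) (c + 1) (d + 1)
         - n * (n + a - b) * (n + a - c) * (n + a - d) * Q2 (k - 1) (n - 1) (a + 1) (b + 1) (c + 1) (d + 1)
      = (2 * n + a) * (\<Sum>j\<le>m. V j * ((b + of_nat j) * (c + of_nat j) * (d + of_nat j) * P j
          - (b + c + d - a + of_nat j) * P (Suc j)))"
    unfolding Q_shift Q_shift_n by (simp add: sum_distrib_left sum_subtractf[symmetric] termwise)
  also have "\<dots> = (2 * n + a) * (b * c * d * Q2 k n a b c d)"
    using hyper_coeff_summation_by_parts[of b m c d a P] assms(3-5)
    unfolding Q2_eq_sum_hyper_coeff k V_def e_def P_def by (simp add: mult_ac)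
  also have "\<dots> = a * b * c * d * ((n + a / 2) / (a / 2)) * Q2 k n a b c d"
    using assms(2) by (simp add: field_simps)
  finally show ?thesis ..
qed

end
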